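(* Let $d\in\mathbb{N}$, let $A$ be a $d\times d$ reclusive matrix and $\mathcal{P}_{A}$ its reclusive partition. Then there exists a clique in $\mathcal{P}_{A}$ of size $d+1$, i.e., $d+1$ distinct members of $\mathcal{P}_A$ that are pairwise adjacent.
   Context: A $d\times d$ matrix $A=(a_{ij})$ is reclusive if $a_{ij}=0$ for $i>j$, $a_{ii}=1$ for all $i$, and $a_{ij}>a_{ik}>0$ for all $i\le j<k$. Its reclusive partition is $\mathcal{P}_A=\{A\vec{v}+[0,1)^d:\vec{v}\in\mathbb{Z}^d\}$. Two members $X,Y$ are adjacent if $\overline{X}\cap\overline{Y}\neq\emptyset$ (closures). *)

theory Defs
  imports "HOL-Analysis.Analysis"
begin

text \<open>Points of R^d are represented as functions nat \<Rightarrow> real that vanish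
outside the index set {0..<d}; a d x d matrix is a function nat \<Rightarrow> nat \<Rightarrow> real,
only its entries with indices below d being relevant.  The space nat \<Rightarrow> real
carries the product topology (HOL-Analysis), which restricted to such
points is the Euclidean topology of R^d.\<close>

definition reclusive :: "nat \<Rightarrow> (nat \<Rightarrow> nat \<Rightarrow> real) \<Rightarrow> bool" where
  "reclusive d A \<longleftrightarrow>
     (\<forall>i<d. \<forall>j<d. j < i \<longrightarrow> A i j = 0) \<and>
     (\<forall>i<d. A i i = 1) \<and>
     (\<forall>i j k. i \<le> j \<and> j < k \<and> k < d \<longrightarrow> A i j > A i k \<and> A i k > 0)"

definition mat_vec :: "nat \<Rightarrow> (nat \<Rightarrow> nat \<Rightarrow> real) \<Rightarrow> (nat \<Rightarrow> real) \<Rightarrow> (nat \<Rightarrow> real)" where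
  "mat_vec d A v = (\<lambda>i. if i < d then (\<Sum>j<d. A i j * v j) else 0)"

definition rcell :: "nat \<Rightarrow> (nat \<Rightarrow> nat \<Rightarrow> real) \<Rightarrow> (nat \<Rightarrow> real) \<Rightarrow> (nat \<Rightarrow> real) set" where
  "rcell d A v = {x. (\<forall>i<d. mat_vec d A v i \<le> x i \<and> x i < mat_vec d A v i + 1) \<and>
                     (\<forall>i\<ge>d. x i = 0)}"

definition int_vecs :: "nat \<Rightarrow> (nat \<Rightarrow> real) set" where
  "int_vecs d = {v. (\<forall>i<d. v i \<in> \<int>) \<and> (\<forall>i\<ge>d. v i = 0)}"

definition reclusive_partition :: "nat \<Rightarrow> (nat \<Rightarrow> nat \<Rightarrow> real) \<Rightarrow> (nat \<Rightarrow> real) set set" where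
  "reclusive_partition d A = rcell d A ` int_vecs d"

definition adjacent :: "'a::topological_space set \<Rightarrow> 'a set \<Rightarrow> bool" where
  "adjacent X Y \<longleftrightarrow> closure X \<inter> closure Y \<noteq> {}"

end

theory Submission
  imports Defs
begin

text \<open>The d + 1 cells are those of the integer vectors
v_k = (1, -1, 1, ..., (-1)^(k-1), 0, ..., 0) for k = 0, ..., d.
Coordinate i of A v_k is (-1)^i times an alternating sum of the decreasing
positive entries A i i = 1 > A i (i+1) > ... of row i, hence (-1)^i (A v_k)_i
lies in [0, 1].  So the point p with p_i = 1 for even i and p_i = 0 for odd i
lies in the closed unit cube at A v_k, the closure of the cell, for every k.
The cells are distinct since (A v_k)_(k-1) = (-1)^(k-1) while (A v_a)_(k-1) = 0
for a < k.\<close>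

lemma alternating_sum_bounds:
  fixes f :: "nat \<Rightarrow> real"
  assumes "\<And>j. Suc j < n \<Longrightarrow> f (Suc j) \<le> f j"
    and "\<And>j. j < n \<Longrightarrow> 0 \<le> f j"
    and "0 < n"
  shows "0 \<le> (\<Sum>j<n. (-1)^j * f j) \<and> (\<Sum>j<n. (-1)^j * f j) \<le> f 0"
  using assms
proof (induction n arbitrary: f)
  case 0
  then show ?case by simp
next
  case (Suc n)
  have split: "(\<Sum>j<Suc n. (-1)^j * f j) = f 0 - (\<Sum>j<n. (-1)^j * f (Suc j))"
    by (simp only: sum.lessThan_Suc_shift) (simp add: sum_negf)
  show ?case
  proof (cases "n = 0")
    case True
    then show ?thesis using Suc.prems(2) by simp
  next
    case False
    have "0 \<le> (\<Sum>j<n. (-1)^j * f (Suc j)) \<and> (\<Sum>j<n. (-1)^j * f (Suc j)) \<le> f 1"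
      using Suc.IH[of "\<lambda>j. f (Suc j)"] Suc.prems False by simp
    moreover have "f 1 \<le> f 0" using Suc.prems(1)[of 0] False by simp
    ultimately show ?thesis using split Suc.prems(2)[of 0] by simp
  qed
qed

lemma in_closure_rcellI:
  assumes "\<And>i. i < d \<Longrightarrow> mat_vec d A v i \<le> p i \<and> p i \<le> mat_vec d A v i + 1"
    and "\<And>i. d \<le> i \<Longrightarrow> p i = 0"
  shows "p \<in> closure (rcell d A v)"
proof -
  define m where "m = mat_vec d A v"
  define g where "g = (\<lambda>t::real. \<lambda>i. p i + t * (m i - p i))"
  have segment: "g ` {0<..1} \<subseteq> rcell d A v"
  proof (intro image_subsetI)
    fix t :: real assume "t \<in> {0<..1}"
    then have t: "0 < t" "t \<le> 1" by auto
    have "m i \<le> g t i \<and> g t i < m i + 1" if "i < d" for i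
    proof -
      have "g t i = m i + (1 - t) * (p i - m i)" by (simp add: g_def algebra_simps)
      moreover have "0 \<le> p i - m i" "p i - m i \<le> 1" using assms(1)[OF that] m_def by auto
      moreover have "(1 - t) * (p i - m i) \<le> 1 - t"
        using t calculation(3) by (simp add: mult_left_le)
      ultimately show ?thesis using t by auto
    qed
    moreover have "g t i = 0" if "d \<le> i" for i
      using assms(2)[OF that] that by (simp add: g_def m_def mat_vec_def)
    ultimately show "g t \<in> rcell d A v" by (simp add: rcell_def m_def)
  qed
  have "continuous_on UNIV g"
    unfolding g_def by (rule continuous_on_coordinatewise_then_product) (intro continuous_intros)
  have "p = g 0" by (simp add: g_def)
  also have "\<dots> \<in> g ` closure {0<..1}" by simp
  also have "\<dots> \<subseteq> closure (g ` {0<..1})"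
    using \<open>continuous_on UNIV g\<close> by (rule continuous_image_closure_subset) simp
  also have "\<dots> \<subseteq> closure (rcell d A v)" using segment by (rule closure_mono)
  finally show ?thesis .
qed

lemma mat_vec_mem_rcell: "mat_vec d A v \<in> rcell d A v"
  unfolding rcell_def by (auto simp: mat_vec_def)

lemma rcell_eqD:
  assumes "rcell d A v = rcell d A w" "i < d"
  shows "mat_vec d A v i = mat_vec d A w i"
proof -
  have "mat_vec d A v \<in> rcell d A w" "mat_vec d A w \<in> rcell d A v"
    using mat_vec_mem_rcell assms(1) by metis+
  then show ?thesis using assms(2) unfolding rcell_def by force
qed

definition alternating_vec :: "nat \<Rightarrow> nat \<Rightarrow> real" where
  "alternating_vec k = (\<lambda>j. if j < k then (-1)^j else 0)"

lemma alternating_vec_in_int_vecs: "k \<le> d \<Longrightarrow> alternating_vec k \<in> int_vecs d"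
  by (auto simp: alternating_vec_def int_vecs_def)

lemma mat_vec_alternating_vec:
  assumes "reclusive d A" "k \<le> d" "i < d"
  shows "mat_vec d A (alternating_vec k) i = (-1)^i * (\<Sum>j<k-i. (-1)^j * A i (i + j))"
proof -
  have "mat_vec d A (alternating_vec k) i = (\<Sum>j<d. A i j * alternating_vec k j)"
    using assms(3) by (simp add: mat_vec_def)
  also have "\<dots> = (\<Sum>j<k. (-1)^j * A i j)"
    using assms(2) by (intro sum.mono_neutral_cong_right) (auto simp: alternating_vec_def)
  also have "\<dots> = (\<Sum>j\<in>{i..<k}. (-1)^j * A i j)"
    using assms unfolding reclusive_def by (intro sum.mono_neutral_right) auto
  also have "\<dots> = (-1)^i * (\<Sum>j<k-i. (-1)^j * A i (i + j))"
    by (simp add: sum.atLeastLessThan_shift_0 atLeast0LessThan sum_distrib_left power_add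
        mult.assoc)
  finally show ?thesis .
qed

lemma reclusive_row_antitone:
  assumes "reclusive d A" "i \<le> j" "Suc j < d"
  shows "A i (Suc j) \<le> A i j"
  using assms unfolding reclusive_def by (simp add: less_imp_le)

lemma reclusive_nonneg:
  assumes "reclusive d A" "i \<le> j" "j < d"
  shows "0 \<le> A i j"
proof (cases "i = j")
  case True
  then show ?thesis using assms unfolding reclusive_def by simp
next
  case False
  then have "i \<le> i \<and> i < j \<and> j < d" using assms(2,3) by simp
  then show ?thesis using assms(1) unfolding reclusive_def by (meson less_imp_le)
qed

lemma reclusive_alternating_row_bounds:
  assumes "reclusive d A" "k \<le> d" "i < d"
  shows "0 \<le> (-1)^i * mat_vec d A (alternating_vec k) i \<and>
         (-1)^i * mat_vec d A (alternating_vec k) i \<le> 1"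
proof (cases "i < k")
  case False
  then show ?thesis using mat_vec_alternating_vec[OF assms] by simp
next
  case True
  have "0 \<le> (\<Sum>j<k-i. (-1)^j * A i (i + j)) \<and> (\<Sum>j<k-i. (-1)^j * A i (i + j)) \<le> A i (i + 0)"
    using True assms
    by (intro alternating_sum_bounds) (auto intro: reclusive_row_antitone reclusive_nonneg)
  moreover have "A i i = 1" using assms unfolding reclusive_def by simp
  ultimately show ?thesis
    using mat_vec_alternating_vec[OF assms] by (simp add: mult.assoc[symmetric])
qed

lemma inj_on_alternating_rcell:
  assumes "reclusive d A"
  shows "inj_on (\<lambda>k. rcell d A (alternating_vec k)) {..d}"
proof (rule linorder_inj_onI')
  fix a k assume "a \<in> {..d}" "k \<in> {..d}" "a < k"
  then have a: "a \<le> d" and k: "k \<le> d" and i: "k - 1 < d" "a - (k - 1) = 0" "k - (k - 1) = 1"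
    by auto
  have "mat_vec d A (alternating_vec a) (k - 1) = 0"
    using mat_vec_alternating_vec[OF assms a i(1)] i(2) by simp
  moreover have "mat_vec d A (alternating_vec k) (k - 1) \<noteq> 0"
    using mat_vec_alternating_vec[OF assms k i(1)] i assms unfolding reclusive_def by simp
  ultimately show "rcell d A (alternating_vec a) \<noteq> rcell d A (alternating_vec k)"
    using rcell_eqD i(1) by metis
qed

theorem mainTheorem12:
  fixes d :: nat and A :: "nat \<Rightarrow> nat \<Rightarrow> real"
  assumes "reclusive d A"
  shows "\<exists>C. C \<subseteq> reclusive_partition d A \<and> finite C \<and> card C = d + 1 \<and>
             (\<forall>X\<in>C. \<forall>Y\<in>C. adjacent X Y)"
proof -
  define C where "C = (\<lambda>k. rcell d A (alternating_vec k)) ` {..d}"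
  define p where "p = (\<lambda>i. if i < d \<and> even i then 1 else (0::real))"
  have "p \<in> closure X" if "X \<in> C" for X
  proof -
    obtain k where k: "k \<le> d" "X = rcell d A (alternating_vec k)"
      using \<open>X \<in> C\<close> unfolding C_def by auto
    show ?thesis
      unfolding k(2)
    proof (rule in_closure_rcellI)
      fix i assume i: "i < d"
      from reclusive_alternating_row_bounds[OF assms k(1) i]
      show "mat_vec d A (alternating_vec k) i \<le> p i \<and> p i \<le> mat_vec d A (alternating_vec k) i + 1"
        using i by (cases "even i") (auto simp: p_def)
    qed (simp add: p_def)
  qed
  then have "\<forall>X\<in>C. \<forall>Y\<in>C. adjacent X Y"
    unfolding adjacent_def by blast
  moreover have "C \<subseteq> reclusive_partition d A"
    unfolding C_def reclusive_partition_def using alternating_vec_in_int_vecs by blast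
  moreover have "card C = d + 1"
    unfolding C_def using card_image[OF inj_on_alternating_rcell[OF assms]] by simp
  ultimately show ?thesis unfolding C_def by blast
qed

end
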